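(* For $N\in\mathbb{N}$ (so $N\ge1$) and $k\in\mathbb{N}\cup\{0\}$, \begin{align*} \mathrm{Ch}_{k+N,\lambda}(x)&=\lambda^{N}\sum_{r=1}^{N}\sum_{i=0}^{r}a^{(\lambda)}_{i,r-i}(N,x)\,\lambda^{-r}2^{-i}\sum_{m+n+a=k}\binom{k}{m,n,a}\Bigl(-\tfrac12\Bigr)^{m}(-1)^{n}(i+m-1)_m\,(r+n-i-1)_n\\ &\qquad\times\sum_{l+e+f+s=a}(-1)^{l}\lambda^{a-s}\frac{\binom{a}{l,e,f,s}}{\binom{e+m}{m}\binom{f+n}{n}}\,(N+l-1)_l\,S_1(e+m,m)\,S_1(f+n,n)\,\mathrm{Ch}_{s,\lambda}(x), \end{align*} where the inner sums run over nonnegative integers, and for $1\le r\le N$, $0\le i\le r$, \[ a^{(\lambda)}_{i,r-i}(N,x)=(-1)^{N+i-r}\, i!\, S_{1,i-1}(r-i)\,(N-1)!\,H_{N-1,r-1}\,(x)_{r-i}. \]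
   Context: Let $\lambda\neq0$. The $\lambda$-Changhee (degenerate Changhee) polynomials $\mathrm{Ch}_{n,\lambda}(x)$ are defined by \[ \frac{2\lambda}{2\lambda+\log(1+\lambda t)}\Bigl(1+\frac{\log(1+\lambda t)}{\lambda}\Bigr)^{x}=\sum_{n=0}^{\infty}\mathrm{Ch}_{n,\lambda}(x)\frac{t^n}{n!}. \] $(y)_0=1$ and $(y)_n=y(y-1)\cdots(y-n+1)$ for $n\ge1$ (falling factorial; in particular $(n-1)_n=0$ for $n\ge1$). $S_1(n,l)$ are the Stirling numbers of the first kind, defined by $(y)_n=\sum_{l=0}^n S_1(n,l)y^l$. Multinomial coefficients $\binom{k}{m,n,a}=\frac{k!}{m!\,n!\,a!}$, etc. Generalized harmonic numbers: $H_{N,0}=1$ for all integers $N\ge 0$; $H_{N,1}=1+\frac12+\cdots+\frac1N$ for $N\ge1$; and for $2\le j\le N$, $H_{N,j}=\frac{H_{N-1,j-1}}{N}+\frac{H_{N-2,j-1}}{N-1}+\cdots+\frac{H_{j-1,j-1}}{j}$. Generalized Changhee power sums (for $k=1$), for integers $N\ge0$: $S_{1,-1}(N)=1$, $S_{1,0}(N)=N+1$, $S_{1,j}(N)=\sum_{l=0}^{N}S_{1,j-1}(l)$ for $j\ge1$. *)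

theory Defs
  imports Complex_Main "HOL-Computational_Algebra.Formal_Power_Series"
    "HOL-Combinatorics.Stirling"
begin

definition log1p_fps :: "real \<Rightarrow> real fps" where
  "log1p_fps lam = fps_ln 1 oo (fps_const lam * fps_X)"

text \<open>Generating function 2 lam / (2 lam + log(1+lam t)) * (1 + log(1+lam t)/lam)^x,
  where (1+u)^x = sum_n (x gchoose n) u^n (fps_binomial) composed with u = log(1+lam t)/lam.\<close>
definition changhee_gf :: "real \<Rightarrow> real \<Rightarrow> real fps" where
  "changhee_gf lam x =
     fps_const (2 * lam) * inverse (fps_const (2 * lam) + log1p_fps lam)
     * (fps_binomial x oo (fps_const (1 / lam) * log1p_fps lam))"

definition Ch :: "nat \<Rightarrow> real \<Rightarrow> real \<Rightarrow> real" where
  "Ch n lam x = fact n * fps_nth (changhee_gf lam x) n"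

definition falling :: "real \<Rightarrow> nat \<Rightarrow> real" where
  "falling y n = (\<Prod>j<n. y - of_nat j)"

text \<open>Signed Stirling numbers of the first kind: (y)_n = sum_l S1 n l y^l.\<close>
definition S1 :: "nat \<Rightarrow> nat \<Rightarrow> int" where
  "S1 n l = (-1) ^ (n - l) * int (stirling n l)"

fun harm :: "nat \<Rightarrow> nat \<Rightarrow> real" where
  "harm N 0 = 1"
| "harm N (Suc j) = (\<Sum>m = Suc j..N. harm (m - 1) j / of_nat m)"

text \<open>Changhee power sums with shifted index: S1pow i N = S_{1,i-1}(N).\<close>
fun S1pow :: "nat \<Rightarrow> nat \<Rightarrow> nat" where
  "S1pow 0 N = 1"
| "S1pow (Suc i) N = (\<Sum>l\<le>N. S1pow i l)"

definition acoef :: "nat \<Rightarrow> nat \<Rightarrow> nat \<Rightarrow> real \<Rightarrow> real" where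
  "acoef N r i x = (-1) ^ (N + i - r) * fact i * of_nat (S1pow i (r - i))
      * fact (N - 1) * harm (N - 1) (r - 1) * falling x (r - i)"

end

theory Submission
  imports Defs
begin

text \<open>
  Put \<open>u = log(1 + \<lambda>t) / \<lambda>\<close>, so that the generating function is
  \<open>F = (1 + u/2)^(-1) (1 + u)^x\<close>. The operator \<open>\<theta> = (1 + \<lambda>t) d/dt\<close> satisfies \<open>\<theta> u = 1\<close>,
  hence acts on powers of \<open>1 + c u\<close> like \<open>d/du\<close>. The operator identity
  \<open>(1 + \<lambda>t)^N D^N = \<Sum>\<^sub>r S1(N,r) \<lambda>^(N-r) \<theta>^r\<close> and the Leibniz rule for \<open>\<theta>\<close> write \<open>D^N F\<close>
  as a combination of the series \<open>(1 + \<lambda>t)^(-N) (1 + u/2)^(-i) (1 + u)^(-(r-i)) F\<close>; reading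
  off the coefficient of \<open>t^k\<close>, with the powers of \<open>u\<close> expanded by Stirling numbers of the
  first kind, gives the formula. The paper's coefficient \<open>a\<^sub>i\<^sub>,\<^sub>r\<^sub>-\<^sub>i(N,x)\<close> is
  \<open>S1(N,r) (r choose i) (-1)^i i! (x)\<^sub>r\<^sub>-\<^sub>i\<close> in disguise, because
  \<open>S\<^sub>1\<^sub>,\<^sub>i\<^sub>-\<^sub>1(r-i) = (r choose i)\<close> and \<open>(N-1)! H\<^sub>N\<^sub>-\<^sub>1\<^sub>,\<^sub>r\<^sub>-\<^sub>1 = |S1(N,r)|\<close>.
\<close>

unbundle fps_syntax

section \<open>Falling factorials, Stirling numbers and harmonic numbers\<close>

lemma falling_0 [simp]: "falling y 0 = 1"
  by (simp add: falling_def)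

lemma falling_Suc: "falling y (Suc n) = falling y n * (y - of_nat n)"
  by (simp add: falling_def)

lemma falling_minus_one: "falling (-1) n = (-1) ^ n * fact n"
  by (induct n) (simp_all add: falling_Suc algebra_simps)

lemma pochhammer_eq_falling: "pochhammer (a::real) n = falling (a + of_nat n - 1) n"
proof (induct n arbitrary: a)
  case (Suc n)
  have "(\<Prod>j<n. a + real (Suc n) - 1 - real (Suc j)) = (\<Prod>j<n. a + real n - 1 - real j)"
    by (intro prod.cong refl) simp
  then have "falling (a + of_nat (Suc n) - 1) (Suc n) = (a + of_nat n) * falling (a + of_nat n - 1) n"
    unfolding falling_def by (subst prod.lessThan_Suc_shift) simp
  then show ?case
    using Suc by (simp add: pochhammer_Suc)
qed simp

lemma gbinomial_uminus_eq_falling: "(- (a::real)) gchoose n = (-1) ^ n * falling (a + of_nat n - 1) n / fact n"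
  by (simp add: gbinomial_pochhammer pochhammer_eq_falling)

lemma S1_0_0 [simp]: "S1 0 0 = 1"
  by (simp add: S1_def)

lemma S1_Suc_0 [simp]: "S1 (Suc n) 0 = 0"
  by (simp add: S1_def)

lemma S1_eq_0: "n < k \<Longrightarrow> S1 n k = 0"
  by (simp add: S1_def stirling_less)

lemma S1_Suc_Suc: "S1 (Suc n) (Suc k) = S1 n k - int n * S1 n (Suc k)"
proof (cases "k < n")
  case True
  then obtain d where "n - k = Suc d" and "n - Suc k = d" by (metis Suc_diff_Suc diff_Suc_1)
  then show ?thesis by (simp add: S1_def algebra_simps)
next
  case False
  then show ?thesis by (simp add: S1_def stirling_less)
qed

lemma S1_mult_power_Suc_Suc:
  "of_int (S1 (Suc n) (Suc k)) * c ^ (n - k)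
    = of_int (S1 n k) * c ^ (n - k) - of_nat n * c * (of_int (S1 n (Suc k)) * (c :: 'a::comm_ring_1) ^ (n - Suc k))"
proof (cases "k < n")
  case True
  then have "c ^ (n - k) = c * c ^ (n - Suc k)"
    by (metis Suc_diff_Suc power_Suc)
  then show ?thesis
    by (simp add: S1_Suc_Suc algebra_simps)
qed (simp add: S1_Suc_Suc S1_eq_0)

lemma harm_eq_0: "n < j \<Longrightarrow> harm n j = 0"
  by (cases j) auto

lemma harm_Suc_Suc: "harm (Suc n) (Suc j) = harm n (Suc j) + harm n j / of_nat (Suc n)"
  by (cases "j \<le> n") (simp_all add: sum.cl_ivl_Suc harm_eq_0)

lemma stirling_Suc_Suc_eq_harm: "real (stirling (Suc n) (Suc j)) = fact n * harm n j"
proof (induct n arbitrary: j)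
  case 0
  then show ?case by (cases j) simp_all
next
  case (Suc n)
  show ?case
  proof (cases j)
    case 0
    then show ?thesis by (simp only: stirling_Suc_n_1 harm.simps(1) of_nat_fact mult_1_right)
  next
    case (Suc j')
    have "real (stirling (Suc (Suc n)) (Suc j))
        = of_nat (Suc n) * real (stirling (Suc n) (Suc j)) + real (stirling (Suc n) j)"
      by (simp only: stirling.simps(4) of_nat_add of_nat_mult)
    also have "\<dots> = of_nat (Suc n) * (fact n * harm n (Suc j')) + fact n * harm n j'"
      using Suc.hyps Suc by simp
    also have "\<dots> = fact (Suc n) * harm (Suc n) j"
      using Suc by (simp add: harm_Suc_Suc field_simps del: of_nat_Suc harm.simps)
    finally show ?thesis .
  qed
qed

lemma S1pow_eq_choose: "S1pow i n = (n + i) choose i"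
proof (induct i arbitrary: n)
  case (Suc i)
  have "S1pow (Suc i) n = (\<Sum>l\<le>n. i + l choose i)"
    using Suc by (simp add: add.commute)
  also have "\<dots> = i + n + 1 choose (i + 1)"
    by (rule choose_rising_sum(1))
  finally show ?case by (simp add: add.commute)
qed simp

lemma sum_atMost_diff_swap:
  fixes g :: "nat \<Rightarrow> nat \<Rightarrow> 'a::comm_monoid_add"
  shows "(\<Sum>x\<le>K. \<Sum>y\<le>K - x. g x y) = (\<Sum>y\<le>K. \<Sum>x\<le>K - y. g x y)"
proof -
  have "(\<Sum>x\<le>K. \<Sum>y\<le>K - x. g x y) = (\<Sum>x\<le>K. \<Sum>y\<in>{y \<in> {..K}. x + y \<le> K}. g x y)"
    by (intro sum.cong refl) auto
  also have "\<dots> = (\<Sum>y\<le>K. \<Sum>x\<in>{x \<in> {..K}. x + y \<le> K}. g x y)"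
    by (rule sum.swap_restrict) auto
  also have "\<dots> = (\<Sum>y\<le>K. \<Sum>x\<le>K - y. g x y)"
    by (intro sum.cong refl) auto
  finally show ?thesis .
qed

lemma sum_atMost_diagonal:
  fixes g :: "nat \<Rightarrow> nat \<Rightarrow> 'a::comm_monoid_add"
  shows "(\<Sum>p\<le>K. \<Sum>m\<le>p. g m (p - m)) = (\<Sum>m\<le>K. \<Sum>e\<le>K - m. g m e)"
proof -
  have "{(m, e). m + e \<le> K} = (SIGMA m:{..K}. {..K - m})"
    by auto
  then show ?thesis
    using sum.triangle_reindex_eq[of g K] by (simp add: sum.Sigma)
qed

lemma fps_mult_nth_double_sum:
  fixes X Y :: "'a::comm_semiring_1 fps"
  assumes "\<And>p. X $ p = (\<Sum>m\<le>p. a m (p - m))"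
  shows "(X * Y) $ K = (\<Sum>m\<le>K. \<Sum>e\<le>K - m. a m e * Y $ (K - m - e))"
proof -
  have "(X * Y) $ K = (\<Sum>p\<le>K. \<Sum>m\<le>p. a m (p - m) * Y $ (K - m - (p - m)))"
    unfolding fps_mult_nth atLeast0AtMost assms sum_distrib_right
    by (intro sum.cong refl) auto
  also have "\<dots> = (\<Sum>m\<le>K. \<Sum>e\<le>K - m. a m e * Y $ (K - m - e))"
    by (rule sum_atMost_diagonal[where g="\<lambda>m e. a m e * Y $ (K - m - e)"])
  finally show ?thesis .
qed

lemma sum_atMost_diff_reorder5:
  fixes H :: "nat \<Rightarrow> nat \<Rightarrow> nat \<Rightarrow> nat \<Rightarrow> nat \<Rightarrow> nat \<Rightarrow> 'a::comm_monoid_add"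
  shows "(\<Sum>l\<le>k. \<Sum>m\<le>k - l. \<Sum>e\<le>k - l - m. \<Sum>n\<le>k - l - m - e. \<Sum>f\<le>k - l - m - e - n.
      H l m e n f (k - l - m - e - n - f))
    = (\<Sum>m\<le>k. \<Sum>n\<le>k - m. \<Sum>l\<le>k - m - n. \<Sum>e\<le>k - m - n - l. \<Sum>f\<le>k - m - n - l - e.
      H l m e n f (k - m - n - l - e - f))"
proof -
  have "(\<Sum>l\<le>k. \<Sum>m\<le>k - l. \<Sum>e\<le>k - l - m. \<Sum>n\<le>k - l - m - e. \<Sum>f\<le>k - l - m - e - n.
      H l m e n f (k - l - m - e - n - f))
    = (\<Sum>m\<le>k. \<Sum>l\<le>k - m. \<Sum>e\<le>k - m - l. \<Sum>n\<le>k - m - l - e. \<Sum>f\<le>k - m - l - e - n.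
      H l m e n f (k - m - l - e - n - f))"
    using sum_atMost_diff_swap[where K=k and g="\<lambda>l m. \<Sum>e\<le>k - l - m. \<Sum>n\<le>k - l - m - e.
      \<Sum>f\<le>k - l - m - e - n. H l m e n f (k - l - m - e - n - f)"]
    by (simp add: diff_diff_left add_ac)
  also have "\<dots> = (\<Sum>m\<le>k. \<Sum>l\<le>k - m. \<Sum>n\<le>k - m - l. \<Sum>e\<le>k - m - l - n. \<Sum>f\<le>k - m - l - e - n.
      H l m e n f (k - m - l - e - n - f))"
    by (subst sum_atMost_diff_swap) simp
  also have "\<dots> = (\<Sum>m\<le>k. \<Sum>n\<le>k - m. \<Sum>l\<le>k - m - n. \<Sum>e\<le>k - m - l - n. \<Sum>f\<le>k - m - l - e - n.
      H l m e n f (k - m - l - e - n - f))"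
    by (subst sum_atMost_diff_swap) simp
  finally show ?thesis
    by (simp add: diff_diff_left add_ac)
qed

section \<open>Formal power series and a weighted derivative\<close>

definition fps_wderiv :: "'a::comm_ring_1 fps \<Rightarrow> 'a fps \<Rightarrow> 'a fps" where
  "fps_wderiv w f = w * fps_deriv f"

lemma fps_wderiv_mult: "fps_wderiv w (f * g) = fps_wderiv w f * g + f * fps_wderiv w g"
  by (simp add: fps_wderiv_def algebra_simps)

lemma fps_wderiv_const_mult: "fps_wderiv w (fps_const c * f) = fps_const c * fps_wderiv w f"
  by (simp add: fps_wderiv_def algebra_simps)

lemma fps_wderiv_sum: "fps_wderiv w (\<Sum>i\<in>S. f i) = (\<Sum>i\<in>S. fps_wderiv w (f i))"
  by (induct S rule: infinite_finite_induct) (simp_all add: fps_wderiv_def algebra_simps)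

lemma fps_wderiv_compose:
  fixes f v :: "'a::idom fps"
  assumes "v $ 0 = 0"
  shows "fps_wderiv w (f oo v) = (fps_deriv f oo v) * fps_wderiv w v"
  using assms by (simp add: fps_wderiv_def fps_compose_deriv mult.commute mult.left_commute)

lemma funpow_fps_wderiv_mult:
  "(fps_wderiv w ^^ n) (f * g) =
     (\<Sum>i\<le>n. fps_const (of_nat (n choose i)) * ((fps_wderiv w ^^ i) f * (fps_wderiv w ^^ (n - i)) g))"
proof (induct n)
  case 0
  then show ?case by simp
next
  case (Suc n)
  define A where "A i = (fps_wderiv w ^^ i) f" for i
  define B where "B i = (fps_wderiv w ^^ i) g" for i
  define c :: "nat \<Rightarrow> nat \<Rightarrow> 'a fps" where "c n i = fps_const (of_nat (n choose i))" for n i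
  have "(fps_wderiv w ^^ Suc n) (f * g) = fps_wderiv w (\<Sum>i\<le>n. c n i * (A i * B (n - i)))"
    using Suc by (simp add: A_def B_def c_def)
  also have "\<dots> = (\<Sum>i\<le>n. c n i * (A (Suc i) * B (n - i)) + c n i * (A i * B (Suc n - i)))"
    unfolding fps_wderiv_sum c_def fps_wderiv_const_mult
    by (intro sum.cong refl) (simp add: fps_wderiv_mult A_def B_def Suc_diff_le distrib_left)
  also have "\<dots> = (\<Sum>i\<le>n. c n i * (A (Suc i) * B (n - i))) + (\<Sum>i\<le>Suc n. c n i * (A i * B (Suc n - i)))"
    by (simp add: sum.distrib c_def binomial_eq_0)
  also have "(\<Sum>i\<le>Suc n. c n i * (A i * B (Suc n - i)))
      = c n 0 * (A 0 * B (Suc n)) + (\<Sum>i\<le>n. c n (Suc i) * (A (Suc i) * B (n - i)))"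
    by (subst sum.atMost_Suc_shift) simp
  also have "(\<Sum>i\<le>n. c n i * (A (Suc i) * B (n - i))) + (c n 0 * (A 0 * B (Suc n))
      + (\<Sum>i\<le>n. c n (Suc i) * (A (Suc i) * B (n - i))))
    = (\<Sum>i\<le>Suc n. c (Suc n) i * (A i * B (Suc n - i)))"
    by (subst sum.atMost_Suc_shift)
       (simp add: c_def distrib_right sum.distrib flip: fps_const_add)
  finally show ?case by (simp add: A_def B_def c_def)
qed

lemma fps_wderiv_power_mult:
  assumes "fps_deriv w = fps_const c"
  shows "fps_wderiv w (w ^ N * g) = fps_const (of_nat N * c) * (w ^ N * g) + w ^ Suc N * fps_deriv g"
proof -
  have "w * fps_deriv (w ^ N) = fps_const (of_nat N * c) * w ^ N"
  proof (cases N)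
    case (Suc m)
    have "w * fps_deriv (w ^ Suc m) = (fps_const (of_nat (Suc m)) * fps_const c) * (w * w ^ m)"
      by (simp only: fps_deriv_power assms diff_Suc_1 mult_ac)
    then show ?thesis
      using Suc by (simp only: fps_const_mult power_Suc)
  qed simp
  then show ?thesis by (simp add: fps_wderiv_def distrib_left mult.assoc[symmetric])
qed

lemma power_mult_funpow_fps_deriv:
  assumes "fps_deriv w = fps_const c"
  shows "w ^ N * (fps_deriv ^^ N) f =
    (\<Sum>r\<le>N. fps_const (of_int (S1 N r) * c ^ (N - r)) * (fps_wderiv w ^^ r) f)"
proof (induct N)
  case 0
  then show ?case by simp
next
  case (Suc N)
  define T where "T r = (fps_wderiv w ^^ r) f" for r
  define a where "a N r = fps_const (of_int (S1 N r) * c ^ (N - r))" for N r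
  have a_big: "a N r = 0" if "N < r" for N r
    using that by (simp add: a_def S1_eq_0)
  have a_rec: "a (Suc N) (Suc r) = a N r - fps_const (of_nat N * c) * a N (Suc r)" for r
    by (simp add: a_def S1_mult_power_Suc_Suc mult.assoc flip: fps_const_mult fps_const_sub)
  have shift: "(\<Sum>r\<le>N. fps_const (of_nat N * c) * a N (Suc r) * T (Suc r))
      = (\<Sum>r\<le>N. fps_const (of_nat N * c) * a N r * T r)"
  proof -
    have "fps_const (of_nat N * c) * a N 0 = 0"
      by (cases N) (simp_all add: a_def)
    then have "(\<Sum>r\<le>N. fps_const (of_nat N * c) * a N r * T r)
        = (\<Sum>r\<le>Suc N. fps_const (of_nat N * c) * a N r * T r)"
      by (simp add: a_big)
    also have "\<dots> = (\<Sum>r\<le>N. fps_const (of_nat N * c) * a N (Suc r) * T (Suc r))"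
      by (subst sum.atMost_Suc_shift) (simp add: \<open>fps_const (of_nat N * c) * a N 0 = 0\<close>)
    finally show ?thesis by simp
  qed
  have "w ^ Suc N * (fps_deriv ^^ Suc N) f
      = fps_wderiv w (w ^ N * (fps_deriv ^^ N) f) - fps_const (of_nat N * c) * (w ^ N * (fps_deriv ^^ N) f)"
    by (simp add: fps_wderiv_power_mult[OF assms])
  also have "\<dots> = (\<Sum>r\<le>N. a N r * T (Suc r)) - (\<Sum>r\<le>N. fps_const (of_nat N * c) * a N r * T r)"
  proof -
    have "fps_wderiv w (a N r * T r) = a N r * T (Suc r)" for r
      by (simp add: a_def T_def fps_wderiv_const_mult)
    then show ?thesis
      unfolding Suc[folded T_def a_def] by (simp add: fps_wderiv_sum sum_distrib_left mult.assoc)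
  qed
  also have "\<dots> = (\<Sum>r\<le>N. a (Suc N) (Suc r) * T (Suc r))"
    unfolding shift[symmetric] a_rec by (simp add: sum_subtractf algebra_simps)
  also have "\<dots> = (\<Sum>r\<le>Suc N. a (Suc N) r * T r)"
    by (subst sum.atMost_Suc_shift) (simp add: a_def)
  finally show ?case by (simp add: T_def a_def)
qed

lemma nth_funpow_fps_deriv:
  "((fps_deriv ^^ N) f) $ k = fact (k + N) / fact k * (f $ (k + N) :: 'a::field_char_0)"
proof (induct N arbitrary: f)
  case (Suc N)
  have "((fps_deriv ^^ Suc N) f) $ k = ((fps_deriv ^^ N) (fps_deriv f)) $ k"
    by (simp add: funpow_Suc_right del: funpow.simps)
  also have "\<dots> = fact (k + N) / fact k * (of_nat (k + N + 1) * f $ (k + Suc N))"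
    using Suc by simp
  also have "\<dots> = fact (k + Suc N) / fact k * f $ (k + Suc N)"
    by (simp add: algebra_simps add_divide_distrib)
  finally show ?case .
qed simp

lemma fps_compose_scale_nth:
  "(g oo (fps_const c * fps_X)) $ p = c ^ p * (g $ p :: 'a::comm_ring_1)"
proof -
  have "(g oo (fps_const c * fps_X)) $ p = (\<Sum>i=0..p. g $ i * (c ^ i * (if p = i then 1 else 0)))"
    unfolding fps_compose_nth by (simp add: power_mult_distrib fps_const_power)
  also have "\<dots> = c ^ p * g $ p"
    by (simp add: if_distrib[of "(*) _"] cong: if_cong)
  finally show ?thesis .
qed

lemma fps_deriv_fps_binomial:
  "fps_deriv (fps_binomial (a::'a::field_char_0)) = fps_const a * fps_binomial (a - 1)"
proof -
  have "(1 + fps_X :: 'a fps) $ 0 \<noteq> 0"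
    by simp
  then have nz: "(1 + fps_X :: 'a fps) \<noteq> 0"
    by (metis fps_zero_nth)
  have "fps_binomial a = fps_binomial (a - 1) * (1 + fps_X)"
    using fps_binomial_add_mult[of "a - 1" 1] by (simp add: fps_binomial_1)
  then have "fps_const a * fps_binomial a / (1 + fps_X)
      = fps_const a * fps_binomial (a - 1) * (1 + fps_X) / (1 + fps_X)"
    by (simp add: mult.assoc)
  also have "\<dots> = fps_const a * fps_binomial (a - 1)"
    using nz by simp
  finally show ?thesis
    by (simp only: fps_binomial_deriv)
qed

section \<open>The generating function of the Changhee polynomials\<close>

definition fps_lin :: "real \<Rightarrow> real fps" where
  "fps_lin lam = 1 + fps_const lam * fps_X"

definition log1p_div :: "real \<Rightarrow> real fps" where
  "log1p_div lam = fps_const (1 / lam) * log1p_fps lam"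

definition binomial_log :: "real \<Rightarrow> real \<Rightarrow> real \<Rightarrow> real fps" where
  "binomial_log lam c a = fps_binomial a oo (fps_const c * log1p_div lam)"

lemma log1p_fps_nth_0 [simp]: "log1p_fps lam $ 0 = 0"
  by (simp add: log1p_fps_def)

lemma inverse_fps_lin: "inverse (fps_lin c) = inverse (1 + fps_X) oo (fps_const c * fps_X)"
proof -
  have c0: "(fps_const c * fps_X :: real fps) $ 0 = 0" by simp
  have "(inverse (1 + fps_X) oo (fps_const c * fps_X)) * fps_lin c
      = (inverse (1 + fps_X) * (1 + fps_X) oo (fps_const c * fps_X))"
    by (simp add: fps_compose_mult_distrib[OF c0] fps_compose_add_distrib fps_lin_def
        fps_X_fps_compose_startby0)
  also have "\<dots> = 1"
    by (simp add: inverse_mult_eq_1)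
  finally show ?thesis
    by (intro fps_inverse_unique) (simp add: mult.commute)
qed

lemma fps_lin_mult_inverse: "fps_lin lam * inverse (fps_lin lam) = 1"
  by (simp add: fps_lin_def inverse_mult_eq_1')

lemma fps_deriv_fps_lin: "fps_deriv (fps_lin lam) = fps_const lam"
  by (simp add: fps_lin_def)

lemma fps_deriv_log1p_fps: "fps_deriv (log1p_fps lam) = fps_const lam * inverse (fps_lin lam)"
proof -
  have c0: "(fps_const lam * fps_X :: real fps) $ 0 = 0" by simp
  show ?thesis
    unfolding log1p_fps_def fps_compose_deriv[OF c0] fps_ln_deriv inverse_fps_lin
    by (simp add: mult.commute)
qed

lemma fps_wderiv_log1p_div:
  assumes "lam \<noteq> 0"
  shows "fps_wderiv (fps_lin lam) (log1p_div lam) = 1"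
proof -
  have "fps_wderiv (fps_lin lam) (log1p_div lam)
      = fps_lin lam * (fps_const (1 / lam) * (fps_const lam * inverse (fps_lin lam)))"
    by (simp add: fps_wderiv_def log1p_div_def fps_deriv_log1p_fps)
  also have "\<dots> = fps_const (1 / lam * lam) * (fps_lin lam * inverse (fps_lin lam))"
    by (simp only: fps_const_mult[symmetric] mult_ac)
  also have "\<dots> = 1"
    using assms by (simp add: fps_lin_mult_inverse)
  finally show ?thesis .
qed

lemma binomial_log_0 [simp]: "binomial_log lam c 0 = 1"
  by (simp add: binomial_log_def)

lemma binomial_log_add: "binomial_log lam c a * binomial_log lam c b = binomial_log lam c (a + b)"
  by (simp add: binomial_log_def log1p_div_def log1p_fps_def fps_binomial_add_mult
      fps_compose_mult_distrib)

lemma fps_wderiv_binomial_log: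
  assumes "lam \<noteq> 0"
  shows "fps_wderiv (fps_lin lam) (binomial_log lam c a) = fps_const (c * a) * binomial_log lam c (a - 1)"
proof -
  have "fps_wderiv (fps_lin lam) (fps_const c * log1p_div lam) = fps_const c"
    using fps_wderiv_log1p_div[OF assms] by (simp add: fps_wderiv_const_mult)
  then show ?thesis
    by (simp add: binomial_log_def fps_wderiv_compose log1p_div_def log1p_fps_def
        fps_deriv_fps_binomial mult.commute mult.left_commute
        flip: fps_const_mult_apply_left fps_const_mult)
qed

lemma funpow_fps_wderiv_binomial_log:
  assumes "lam \<noteq> 0"
  shows "(fps_wderiv (fps_lin lam) ^^ n) (binomial_log lam c a)
    = fps_const (c ^ n * falling a n) * binomial_log lam c (a - of_nat n)"
  by (induct n)
     (simp_all add: fps_wderiv_const_mult fps_wderiv_binomial_log[OF assms] falling_Suc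
       diff_diff_eq add.commute mult_ac flip: fps_const_mult)

lemma changhee_gf_eq_binomial_log:
  assumes "lam \<noteq> 0"
  shows "changhee_gf lam x = binomial_log lam (1/2) (-1) * binomial_log lam 1 x"
proof -
  define A where "A = fps_const (2 * lam) + log1p_fps lam"
  have "binomial_log lam (1/2) 1 = 1 + fps_const (1/2 * (1/lam)) * log1p_fps lam"
    by (simp add: binomial_log_def fps_binomial_1 fps_compose_add_distrib log1p_div_def
        fps_X_fps_compose_startby0 mult.assoc[symmetric] fps_const_mult)
  also have "\<dots> = fps_const (1 / (2 * lam)) * A"
    using assms by (simp add: A_def distrib_left fps_const_mult)
  finally have "A * (fps_const (1 / (2 * lam)) * binomial_log lam (1/2) (-1))
      = binomial_log lam (1/2) 1 * binomial_log lam (1/2) (-1)"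
    by (simp only: ac_simps)
  also have "\<dots> = 1"
    by (simp add: binomial_log_add)
  finally have "inverse A = fps_const (1 / (2 * lam)) * binomial_log lam (1/2) (-1)"
    by (rule fps_inverse_unique)
  then show ?thesis
    using assms by (simp add: changhee_gf_def A_def binomial_log_def log1p_div_def
        mult.assoc[symmetric] fps_const_mult)
qed

lemma funpow_fps_wderiv_changhee_gf:
  assumes "lam \<noteq> 0"
  shows "(fps_wderiv (fps_lin lam) ^^ r) (changhee_gf lam x) =
    (\<Sum>i\<le>r. fps_const (of_nat (r choose i) * (-1/2) ^ i * fact i * falling x (r - i)) *
       (binomial_log lam (1/2) (- of_nat i) * binomial_log lam 1 (- of_nat (r - i)) * changhee_gf lam x))"
proof -
  let ?\<theta> = "fps_wderiv (fps_lin lam)"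
  have "fps_const (of_nat (r choose i)) *
      ((?\<theta> ^^ i) (binomial_log lam (1/2) (-1)) * (?\<theta> ^^ (r - i)) (binomial_log lam 1 x))
    = fps_const (of_nat (r choose i) * (-1/2) ^ i * fact i * falling x (r - i)) *
       (binomial_log lam (1/2) (- of_nat i) * binomial_log lam 1 (- of_nat (r - i)) * changhee_gf lam x)"
    for i
  proof -
    have neg_half_power: "(- (1/2::real)) ^ i = (-1) ^ i * (1/2) ^ i"
      by (metis mult_minus1 power_mult_distrib)
    have "binomial_log lam (1/2) (-1 - of_nat i) = binomial_log lam (1/2) (- of_nat i) * binomial_log lam (1/2) (-1)"
      by (simp add: binomial_log_add algebra_simps)
    moreover have "binomial_log lam 1 (x - of_nat (r - i)) = binomial_log lam 1 (- of_nat (r - i)) * binomial_log lam 1 x"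
      by (simp add: binomial_log_add)
    ultimately show ?thesis
      by (simp add: funpow_fps_wderiv_binomial_log[OF assms] changhee_gf_eq_binomial_log[OF assms]
          falling_minus_one neg_half_power mult_ac flip: fps_const_mult)
  qed
  then show ?thesis
    unfolding changhee_gf_eq_binomial_log[OF assms] funpow_fps_wderiv_mult by simp
qed

lemma funpow_fps_deriv_changhee_gf:
  assumes "lam \<noteq> 0"
  shows "(fps_deriv ^^ N) (changhee_gf lam x) =
    (\<Sum>r\<le>N. \<Sum>i\<le>r. fps_const (of_int (S1 N r) * lam ^ (N - r) *
        (of_nat (r choose i) * (-1/2) ^ i * fact i * falling x (r - i))) *
      (inverse (fps_lin lam) ^ N * binomial_log lam (1/2) (- of_nat i) *
        binomial_log lam 1 (- of_nat (r - i)) * changhee_gf lam x))"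
proof -
  let ?F = "changhee_gf lam x" and ?P = "inverse (fps_lin lam) ^ N"
  have "?P * fps_lin lam ^ N = 1"
    by (simp add: fps_lin_mult_inverse mult.commute flip: power_mult_distrib)
  then have "(fps_deriv ^^ N) ?F = ?P * (fps_lin lam ^ N * (fps_deriv ^^ N) ?F)"
    by (simp add: mult.assoc[symmetric])
  also have "\<dots> = ?P * (\<Sum>r\<le>N. fps_const (of_int (S1 N r) * lam ^ (N - r)) *
      (\<Sum>i\<le>r. fps_const (of_nat (r choose i) * (-1/2) ^ i * fact i * falling x (r - i)) *
       (binomial_log lam (1/2) (- of_nat i) * binomial_log lam 1 (- of_nat (r - i)) * ?F)))"
    unfolding power_mult_funpow_fps_deriv[OF fps_deriv_fps_lin]
      funpow_fps_wderiv_changhee_gf[OF assms] ..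
  also have "\<dots> = (\<Sum>r\<le>N. \<Sum>i\<le>r. fps_const (of_int (S1 N r) * lam ^ (N - r) *
        (of_nat (r choose i) * (-1/2) ^ i * fact i * falling x (r - i))) *
      (?P * binomial_log lam (1/2) (- of_nat i) * binomial_log lam 1 (- of_nat (r - i)) * ?F))"
    unfolding sum_distrib_left
    by (intro sum.cong refl) (simp only: fps_const_mult[symmetric] mult_ac)
  finally show ?thesis .
qed

lemma inverse_fps_lin_power_nth:
  "(inverse (fps_lin lam) ^ N) $ l = (-1) ^ l * falling (of_nat N + of_nat l - 1) l * lam ^ l / fact l"
proof -
  have c0: "(fps_const lam * fps_X :: real fps) $ 0 = 0" by simp
  have "inverse (fps_lin lam) ^ N = fps_binomial (- of_nat N) oo (fps_const lam * fps_X)"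
    unfolding inverse_fps_lin fps_binomial_minus_one[symmetric]
      fps_compose_power[OF c0] fps_binomial_power by simp
  then show ?thesis
    by (simp add: fps_compose_scale_nth gbinomial_uminus_eq_falling)
qed

lemma fps_ln_power_nth: "((fps_ln (1::real)) ^ m) $ p = fact m * of_int (S1 p m) / fact p"
proof (induct m arbitrary: p)
  case 0
  then show ?case by (cases p) (simp_all add: S1_def)
next
  case (Suc m)
  define A where "A = (fps_ln (1::real)) ^ Suc m"
  have "(1 + fps_X) * fps_deriv A = fps_const (of_nat (Suc m)) * fps_ln 1 ^ m"
  proof -
    have "(1 + fps_X :: real fps) * inverse (1 + fps_X) = 1"
      by (simp add: inverse_mult_eq_1')
    then show ?thesis
      unfolding A_def fps_deriv_power fps_ln_deriv by (simp add: ac_simps)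
  qed
  then have "((1 + fps_X) * fps_deriv A) $ p = of_nat (Suc m) * (fact m * of_int (S1 p m) / fact p)" for p
    using Suc by simp
  moreover have "((1 + fps_X) * fps_deriv A) $ p = of_nat (Suc p) * A $ Suc p + of_nat p * A $ p" for p
    by (cases p) (simp_all add: distrib_right)
  ultimately have rec: "A $ Suc p = (of_nat (Suc m) * (fact m * of_int (S1 p m) / fact p) - of_nat p * A $ p)
      / of_nat (Suc p)" for p
    by (simp add: eq_divide_eq algebra_simps del: of_nat_Suc)
  show ?case
  proof (induct p)
    case 0
    then show ?case by (simp add: A_def[symmetric] A_def fps_power_zeroth S1_def)
  next
    case (Suc p)
    then show ?case
      unfolding A_def[symmetric] rec by (simp add: S1_Suc_Suc field_simps del: of_nat_Suc)
  qed
qed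

lemma log1p_div_power_nth:
  assumes "lam \<noteq> 0"
  shows "(log1p_div lam ^ m) $ p = lam ^ (p - m) * fact m * of_int (S1 p m) / fact p"
proof -
  have c0: "(fps_const lam * fps_X :: real fps) $ 0 = 0" by simp
  have "(log1p_div lam ^ m) $ p = (1 / lam) ^ m * (lam ^ p * (fact m * of_int (S1 p m) / fact p))"
    unfolding log1p_div_def log1p_fps_def power_mult_distrib fps_compose_power[OF c0]
    by (simp add: fps_const_power fps_compose_scale_nth fps_ln_power_nth)
  also have "\<dots> = lam ^ (p - m) * fact m * of_int (S1 p m) / fact p"
  proof (cases "m \<le> p")
    case True
    then have "lam ^ p = lam ^ (p - m) * lam ^ m"
      by (simp flip: power_add)
    then show ?thesis
      using assms by (simp add: field_simps)
  qed (simp add: S1_eq_0)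
  finally show ?thesis .
qed

lemma binomial_log_uminus_nth:
  assumes "lam \<noteq> 0"
  shows "(binomial_log lam c (- of_nat j)) $ p =
    (\<Sum>n\<le>p. (- c) ^ n * falling (of_nat j + of_nat n - 1) n * lam ^ (p - n) * of_int (S1 p n) / fact p)"
  unfolding binomial_log_def fps_compose_nth atLeast0AtMost
  by (intro sum.cong refl)
     (simp add: power_mult_distrib fps_const_power log1p_div_power_nth[OF assms]
       gbinomial_uminus_eq_falling power_minus[of c] field_simps)

lemma inverse_fps_lin_power_binomial_log_mult_nth:
  assumes "lam \<noteq> 0"
  shows "(inverse (fps_lin lam) ^ N * binomial_log lam c (- of_nat i) * binomial_log lam d (- of_nat j) * F) $ k =
    (\<Sum>m\<le>k. \<Sum>n\<le>k - m. \<Sum>l\<le>k - m - n. \<Sum>e\<le>k - m - n - l. \<Sum>f\<le>k - m - n - l - e.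
      ((-1) ^ l * falling (of_nat N + of_nat l - 1) l * lam ^ l / fact l) *
      (((- c) ^ m * falling (of_nat i + of_nat m - 1) m * lam ^ e * of_int (S1 (e + m) m) / fact (e + m)) *
      (((- d) ^ n * falling (of_nat j + of_nat n - 1) n * lam ^ f * of_int (S1 (f + n) n) / fact (f + n)) *
        F $ (k - m - n - l - e - f))))"
proof -
  define P where "P l = (-1) ^ l * falling (of_nat N + of_nat l - 1) l * lam ^ l / fact l" for l
  define C where "C m e = (- c) ^ m * falling (of_nat i + of_nat m - 1) m * lam ^ e
    * of_int (S1 (e + m) m) / fact (e + m)" for m e
  define D where "D n f = (- d) ^ n * falling (of_nat j + of_nat n - 1) n * lam ^ f
    * of_int (S1 (f + n) n) / fact (f + n)" for n f
  have C: "binomial_log lam c (- of_nat i) $ p = (\<Sum>m\<le>p. C m (p - m))" for p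
    unfolding binomial_log_uminus_nth[OF assms] C_def by (intro sum.cong refl) auto
  have D: "binomial_log lam d (- of_nat j) $ p = (\<Sum>n\<le>p. D n (p - n))" for p
    unfolding binomial_log_uminus_nth[OF assms] D_def by (intro sum.cong refl) auto
  have "(inverse (fps_lin lam) ^ N * (binomial_log lam c (- of_nat i) * (binomial_log lam d (- of_nat j) * F))) $ k =
    (\<Sum>l\<le>k. \<Sum>m\<le>k - l. \<Sum>e\<le>k - l - m. \<Sum>n\<le>k - l - m - e. \<Sum>f\<le>k - l - m - e - n.
      P l * (C m e * (D n f * F $ (k - l - m - e - n - f))))"
    unfolding fps_mult_nth[of "inverse (fps_lin lam) ^ N"] atLeast0AtMost inverse_fps_lin_power_nth
      P_def[symmetric] fps_mult_nth_double_sum[OF C] fps_mult_nth_double_sum[OF D]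
    by (simp only: sum_distrib_left)
  also have "\<dots> = (\<Sum>m\<le>k. \<Sum>n\<le>k - m. \<Sum>l\<le>k - m - n. \<Sum>e\<le>k - m - n - l. \<Sum>f\<le>k - m - n - l - e.
      P l * (C m e * (D n f * F $ (k - m - n - l - e - f))))"
    by (rule sum_atMost_diff_reorder5[where H="\<lambda>l m e n f s. P l * (C m e * (D n f * F $ s))"])
  finally show ?thesis
    by (simp only: P_def C_def D_def mult.assoc)
qed

lemma acoef_eq_S1:
  assumes "lam \<noteq> 0" "1 \<le> r" "r \<le> N" "i \<le> r"
  shows "lam ^ N * (acoef N r i x * inverse (lam ^ r) * inverse (2 ^ i))
    = of_int (S1 N r) * lam ^ (N - r) * (of_nat (r choose i) * (-1/2) ^ i * fact i * falling x (r - i))"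
proof -
  obtain N' where N': "N = Suc N'"
    using assms by (cases N) auto
  obtain r' where r': "r = Suc r'"
    using assms by (cases r) auto
  have st: "fact (N - 1) * harm (N - 1) (r - 1) = real (stirling N r)"
    using stirling_Suc_Suc_eq_harm[of N' r'] N' r' by simp
  have s1: "S1pow i (r - i) = r choose i"
    using assms by (simp add: S1pow_eq_choose)
  have sg: "(-1::real) ^ (N + i - r) = (-1) ^ (N - r) * (-1) ^ i"
    using assms by (simp flip: power_add)
  have lp: "lam ^ N = lam ^ (N - r) * lam ^ r"
    using assms by (simp flip: power_add)
  have S1: "of_int (S1 N r) = (-1) ^ (N - r) * real (stirling N r)"
    by (simp add: S1_def)
  show ?thesis
    unfolding acoef_def s1 sg lp S1 power_divide using st assms by (simp add: field_simps)
qed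

lemma changhee_expansion_nth:
  assumes "lam \<noteq> 0"
  shows "fact k * (inverse (fps_lin lam) ^ N * binomial_log lam (1/2) (- of_nat i)
      * binomial_log lam 1 (- of_nat j) * changhee_gf lam x) $ k =
    (\<Sum>m\<le>k. \<Sum>n\<le>k - m. let a = k - m - n in
       fact k / (fact m * fact n * fact a) * (- 1 / 2) ^ m * (- 1) ^ n
       * falling (of_nat i + of_nat m - 1) m
       * falling (of_nat j + of_nat n - 1) n
       * (\<Sum>l\<le>a. \<Sum>e\<le>a - l. \<Sum>f\<le>a - l - e. let s = a - l - e - f in
            (- 1) ^ l * lam ^ (a - s)
            * (fact a / (fact l * fact e * fact f * fact s))
            / (of_nat ((e + m) choose m) * of_nat ((f + n) choose n))
            * falling (of_nat N + of_nat l - 1) l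
            * of_int (S1 (e + m) m) * of_int (S1 (f + n) n)
            * Ch s lam x))"
proof -
  have summand: "fact k * (((-1) ^ l * falling (of_nat N + of_nat l - 1) l * lam ^ l / fact l) *
      (((- (1/2)) ^ m * falling (of_nat i + of_nat m - 1) m * lam ^ e * of_int (S1 (e + m) m) / fact (e + m)) *
      (((- 1) ^ n * falling (of_nat j + of_nat n - 1) n * lam ^ f * of_int (S1 (f + n) n) / fact (f + n)) *
        changhee_gf lam x $ s)))
    = fact k / (fact m * fact n * fact a) * (- 1 / 2) ^ m * (- 1) ^ n
       * falling (of_nat i + of_nat m - 1) m
       * falling (of_nat j + of_nat n - 1) n
       * ((- 1) ^ l * lam ^ (a - s)
            * (fact a / (fact l * fact e * fact f * fact s))
            / (of_nat ((e + m) choose m) * of_nat ((f + n) choose n))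
            * falling (of_nat N + of_nat l - 1) l
            * of_int (S1 (e + m) m) * of_int (S1 (f + n) n)
            * Ch s lam x)"
    if "l + e + f + s = a" for a l e f s m n
  proof -
    have "a - s = l + e + f"
      using that by linarith
    then have pow: "lam ^ (a - s) = lam ^ l * lam ^ e * lam ^ f"
      by (simp add: power_add)
    have binom: "real ((e + m) choose m) = fact (e + m) / (fact m * fact e)"
      "real ((f + n) choose n) = fact (f + n) / (fact n * fact f)"
      by (simp_all add: binomial_fact)
    show ?thesis
      unfolding pow binom Ch_def by (simp add: field_simps)
  qed
  show ?thesis
    unfolding inverse_fps_lin_power_binomial_log_mult_nth[OF assms] Let_def sum_distrib_left
    by (intro sum.cong refl) (rule summand, auto)
qed

theorem theorem4:
  fixes lam x :: real and N k :: nat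
  assumes "lam \<noteq> 0" and "N \<ge> 1"
  shows "Ch (k + N) lam x =
    lam ^ N * (\<Sum>r = 1..N. \<Sum>i = 0..r.
      acoef N r i x * inverse (lam ^ r) * inverse (2 ^ i) *
      (\<Sum>m\<le>k. \<Sum>n\<le>k - m. let a = k - m - n in
         fact k / (fact m * fact n * fact a) * (- 1 / 2) ^ m * (- 1) ^ n
         * falling (of_nat i + of_nat m - 1) m
         * falling (of_nat r + of_nat n - of_nat i - 1) n
         * (\<Sum>l\<le>a. \<Sum>e\<le>a - l. \<Sum>f\<le>a - l - e. let s = a - l - e - f in
              (- 1) ^ l * lam ^ (a - s)
              * (fact a / (fact l * fact e * fact f * fact s))
              / (of_nat ((e + m) choose m) * of_nat ((f + n) choose n))
              * falling (of_nat N + of_nat l - 1) l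
              * of_int (S1 (e + m) m) * of_int (S1 (f + n) n)
              * Ch s lam x)))" (is "_ = ?rhs")
proof -
  define T where "T r i = fact k * (inverse (fps_lin lam) ^ N * binomial_log lam (1/2) (- of_nat i)
    * binomial_log lam 1 (- of_nat (r - i)) * changhee_gf lam x) $ k" for r i
  define c where "c r i = of_int (S1 N r) * lam ^ (N - r)
    * (of_nat (r choose i) * (-1/2) ^ i * fact i * falling x (r - i))" for r i
  have "Ch (k + N) lam x = fact k * ((fps_deriv ^^ N) (changhee_gf lam x)) $ k"
    by (simp add: Ch_def nth_funpow_fps_deriv)
  also have "\<dots> = (\<Sum>r\<le>N. \<Sum>i\<le>r. c r i * T r i)"
    unfolding funpow_fps_deriv_changhee_gf[OF assms(1)] fps_sum_nth fps_mult_left_const_nth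
      sum_distrib_left c_def T_def
    by (simp only: mult_ac)
  also have "\<dots> = (\<Sum>r = 1..N. \<Sum>i = 0..r. c r i * T r i)"
    using assms(2) by (simp add: atMost_atLeast0 sum.atLeast_Suc_atMost c_def S1_def)
  also have "\<dots> = lam ^ N * (\<Sum>r = 1..N. \<Sum>i = 0..r. acoef N r i x * inverse (lam ^ r) * inverse (2 ^ i) * T r i)"
    unfolding sum_distrib_left
  proof (intro sum.cong refl)
    fix r i
    assume "r \<in> {1..N}" and "i \<in> {0..r}"
    then have "lam ^ N * (acoef N r i x * inverse (lam ^ r) * inverse (2 ^ i)) = c r i"
      unfolding c_def by (intro acoef_eq_S1[OF assms(1)]) auto
    then show "c r i * T r i = lam ^ N * (acoef N r i x * inverse (lam ^ r) * inverse (2 ^ i) * T r i)"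
      by (simp add: mult.assoc)
  qed
  also have "\<dots> = ?rhs"
    unfolding T_def changhee_expansion_nth[OF assms(1)]
    by (intro arg_cong[where f="\<lambda>s. lam ^ N * s"] sum.cong refl) (simp add: of_nat_diff diff_add_eq)
  finally show ?thesis .
qed

end
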